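(* Every triangle-free unit disk graph has a proper vertex coloring with at most $4$ colors.
   Context: A graph $G$ is a unit disk graph if its vertices can be put in one-to-one correspondence with closed disks of radius $1$ in the plane so that two vertices are adjacent if and only if the corresponding disks intersect (tangent disks are considered to intersect). A graph is triangle-free if it has no subgraph isomorphic to $K_3$. *)

theory Defs
  imports "HOL-Analysis.Analysis"
begin

definition simple_graph :: "'a set \<Rightarrow> ('a \<Rightarrow> 'a \<Rightarrow> bool) \<Rightarrow> bool" where
  "simple_graph V E \<longleftrightarrow>
     (\<forall>u v. E u v \<longrightarrow> u \<in> V \<and> v \<in> V) \<and>
     (\<forall>u. \<not> E u u) \<and> (\<forall>u v. E u v \<longrightarrow> E v u)"

definition unit_disk :: "real^2 \<Rightarrow> (real^2) set" where
  "unit_disk c = cball c 1"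

definition unit_disk_graph :: "'a set \<Rightarrow> ('a \<Rightarrow> 'a \<Rightarrow> bool) \<Rightarrow> bool" where
  "unit_disk_graph V E \<longleftrightarrow>
     (\<exists>c :: 'a \<Rightarrow> real^2. inj_on c V \<and>
        (\<forall>u\<in>V. \<forall>v\<in>V. u \<noteq> v \<longrightarrow>
           (E u v \<longleftrightarrow> unit_disk (c u) \<inter> unit_disk (c v) \<noteq> {})))"

definition triangle_free :: "'a set \<Rightarrow> ('a \<Rightarrow> 'a \<Rightarrow> bool) \<Rightarrow> bool" where
  "triangle_free V E \<longleftrightarrow>
     \<not> (\<exists>u\<in>V. \<exists>v\<in>V. \<exists>w\<in>V. E u v \<and> E v w \<and> E u w)"

definition proper_coloring ::
    "'a set \<Rightarrow> ('a \<Rightarrow> 'a \<Rightarrow> bool) \<Rightarrow> ('a \<Rightarrow> nat) \<Rightarrow> bool" where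
  "proper_coloring V E f \<longleftrightarrow> (\<forall>u\<in>V. \<forall>v\<in>V. E u v \<longrightarrow> f u \<noteq> f v)"

end

theory Submission imports Defs begin

text \<open>A triangle-free unit disk graph is 3-degenerate, so greedy colouring needs only four
colours. Let w be a vertex whose centre has least abscissa. The centres of its neighbours lie
in the right half of the disk of radius 2 about the centre of w, which is cut into three sectors of opening
angle \<open>pi/3\<close>; two points of one sector are at distance at most 2. Two neighbours in one sector
would therefore be adjacent and form a triangle with w, so w has at most three neighbours.\<close>

definition degenerate :: "nat \<Rightarrow> 'a set \<Rightarrow> ('a \<Rightarrow> 'a \<Rightarrow> bool) \<Rightarrow> bool" where
  "degenerate k V E \<longleftrightarrow> (\<forall>A\<subseteq>V. A \<noteq> {} \<longrightarrow> (\<exists>w\<in>A. card {u\<in>A. E w u} \<le> k))"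

lemma degenerate_subset: "degenerate k V E \<Longrightarrow> A \<subseteq> V \<Longrightarrow> degenerate k A E"
  unfolding degenerate_def by blast

lemma ex_le_notin_image:
  fixes f :: "'a \<Rightarrow> nat"
  assumes "finite N" "card N \<le> k"
  shows "\<exists>c\<le>k. c \<notin> f ` N"
proof (rule ccontr)
  assume "\<not> ?thesis"
  then have "{..k} \<subseteq> f ` N" by auto
  then have "card {..k} \<le> card (f ` N)" using assms(1) by (intro card_mono) auto
  also have "\<dots> \<le> k" using card_image_le[OF assms(1), of f] assms(2) by linarith
  finally show False by simp
qed

lemma proper_coloring_fun_upd:
  assumes "proper_coloring (A - {w}) E f" "c \<notin> f ` {u\<in>A. E w u}"
    and "\<And>u. \<not> E u u" "\<And>u v. E u v \<Longrightarrow> E v u"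
  shows "proper_coloring A E (f(w := c))"
  using assms unfolding proper_coloring_def by (metis (mono_tags, lifting) DiffI
      fun_upd_apply image_eqI mem_Collect_eq singletonD)

lemma degenerate_imp_proper_coloring:
  assumes "finite V" "degenerate k V E" "\<And>u. \<not> E u u" "\<And>u v. E u v \<Longrightarrow> E v u"
  shows "\<exists>f. proper_coloring V E f \<and> (\<forall>v\<in>V. f v \<le> k)"
  using assms(1,2)
proof (induction "card V" arbitrary: V rule: less_induct)
  case less
  show ?case
  proof (cases "V = {}")
    case True
    then show ?thesis by (simp add: proper_coloring_def)
  next
    case False
    then obtain w where w: "w \<in> V" "card {u\<in>V. E w u} \<le> k"
      using less.prems(2) unfolding degenerate_def by blast
    have "card (V - {w}) < card V" by (rule card_Diff1_less[OF less.prems(1) w(1)])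
    then obtain f where f: "proper_coloring (V - {w}) E f" "\<forall>v\<in>V - {w}. f v \<le> k"
      using less.hyps less.prems degenerate_subset[of k V E "V - {w}"] by blast
    obtain c where c: "c \<le> k" "c \<notin> f ` {u\<in>V. E w u}"
      using ex_le_notin_image[OF _ w(2)] less.prems(1) by auto
    have "proper_coloring V E (f(w := c))"
      using proper_coloring_fun_upd[OF f(1) c(2)] assms(3,4) by blast
    moreover have "\<forall>v\<in>V. (f(w := c)) v \<le> k" using f(2) c(1) by simp
    ultimately show ?thesis by blast
  qed
qed

lemma dist_le_if_inner_ge_half_norm_mult:
  fixes p q :: "'a::real_inner"
  assumes "norm p \<le> r" "norm q \<le> r" "norm p * norm q \<le> 2 * (p \<bullet> q)"
  shows "dist p q \<le> r"
proof -
  have "(dist p q)\<^sup>2 = (norm p)\<^sup>2 + (norm q)\<^sup>2 - 2 * (p \<bullet> q)"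
    by (simp add: dist_norm dot_norm_neg field_simps)
  also have "\<dots> \<le> (norm p)\<^sup>2 + (norm q)\<^sup>2 - norm p * norm q" using assms(3) by simp
  also have "\<dots> \<le> r\<^sup>2"
  proof (cases "norm p \<le> norm q")
    case True
    then have "(norm p)\<^sup>2 \<le> norm p * norm q" by (simp add: power2_eq_square mult_left_mono)
    moreover have "(norm q)\<^sup>2 \<le> r\<^sup>2" using assms(2) by (simp add: power_mono)
    ultimately show ?thesis by linarith
  next
    case False
    then have "(norm q)\<^sup>2 \<le> norm p * norm q" by (simp add: power2_eq_square mult_right_mono)
    moreover have "(norm p)\<^sup>2 \<le> r\<^sup>2" using assms(1) by (simp add: power_mono)
    ultimately show ?thesis by linarith
  qed
  finally show ?thesis
    by (rule power2_le_imp_le) (use assms(1) norm_ge_zero[of p] in linarith)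
qed

text \<open>The polar angle, valid only in the closed right half-plane \<open>0 \<le> p$1\<close>; at the
origin it is \<open>arcsin 0 = 0\<close> because of \<open>0 / 0 = 0\<close>.\<close>

definition polar_angle :: "real^2 \<Rightarrow> real" where
  "polar_angle p = arcsin (p$2 / norm p)"

definition sector :: "real^2 \<Rightarrow> nat" where
  "sector p = (if polar_angle p \<le> - pi/6 then 0 else if polar_angle p \<le> pi/6 then 1 else 2)"

lemma polar_angle:
  fixes p :: "real^2"
  assumes "0 \<le> p$1"
  shows "p$1 = norm p * cos (polar_angle p)" "p$2 = norm p * sin (polar_angle p)"
    "- (pi/2) \<le> polar_angle p" "polar_angle p \<le> pi/2"
proof -
  have "\<bar>p$2 / norm p\<bar> \<le> 1"
    using component_le_norm_cart[of p 2] by (simp add: abs_divide divide_le_eq_1)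
  then have ratio: "-1 \<le> p$2 / norm p" "p$2 / norm p \<le> 1" by linarith+
  show "- (pi/2) \<le> polar_angle p" "polar_angle p \<le> pi/2"
    using arcsin_bounded[OF ratio] by (auto simp: polar_angle_def)
  show "p$2 = norm p * sin (polar_angle p)"
    using ratio by (cases "p = 0") (simp_all add: polar_angle_def)
  show "p$1 = norm p * cos (polar_angle p)"
  proof (cases "p = 0")
    case False
    have "(p$1)\<^sup>2 + (p$2)\<^sup>2 = (norm p)\<^sup>2"
      by (simp add: norm_vec_def L2_set_def sum_2)
    then have "(p$1 / norm p)\<^sup>2 + (p$2 / norm p)\<^sup>2 = (norm p)\<^sup>2 / (norm p)\<^sup>2"
      by (simp only: power_divide add_divide_distrib[symmetric])
    then have "1 - (p$2 / norm p)\<^sup>2 = (p$1 / norm p)\<^sup>2" using False by simp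
    then have "cos (polar_angle p) = sqrt ((p$1 / norm p)\<^sup>2)"
      using cos_arcsin[OF ratio] by (simp add: polar_angle_def)
    also have "\<dots> = p$1 / norm p" using assms by simp
    finally show ?thesis using False by simp
  qed simp
qed

lemma inner_eq_polar_angle:
  fixes p q :: "real^2"
  assumes "0 \<le> p$1" "0 \<le> q$1"
  shows "p \<bullet> q = norm p * norm q * cos (polar_angle p - polar_angle q)"
proof -
  note P = polar_angle[OF assms(1)] and Q = polar_angle[OF assms(2)]
  have "p \<bullet> q = p$1 * q$1 + p$2 * q$2" by (simp add: inner_vec_def sum_2)
  also have "\<dots> = (norm p * cos (polar_angle p)) * (norm q * cos (polar_angle q))
      + (norm p * sin (polar_angle p)) * (norm q * sin (polar_angle q))"
    by (simp only: P(1,2)[symmetric] Q(1,2)[symmetric])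
  also have "\<dots> = norm p * norm q * cos (polar_angle p - polar_angle q)"
    unfolding cos_diff by algebra
  finally show ?thesis .
qed

lemma inner_ge_half_norm_mult_if_same_sector:
  fixes p q :: "real^2"
  assumes "0 \<le> p$1" "0 \<le> q$1" "sector p = sector q"
  shows "norm p * norm q \<le> 2 * (p \<bullet> q)"
proof -
  have "\<bar>polar_angle p - polar_angle q\<bar> \<le> pi/3"
    using assms(3) polar_angle(3,4)[OF assms(1)] polar_angle(3,4)[OF assms(2)]
    unfolding sector_def abs_le_iff by (auto split: if_splits)
  then have "cos (pi/3) \<le> cos \<bar>polar_angle p - polar_angle q\<bar>"
    by (intro cos_monotone_0_pi_le) auto
  then have "1/2 \<le> cos (polar_angle p - polar_angle q)" by (simp add: cos_60)
  then have "norm p * norm q * (1/2) \<le> norm p * norm q * cos (polar_angle p - polar_angle q)"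
    by (intro mult_left_mono) auto
  then show ?thesis unfolding inner_eq_polar_angle[OF assms(1,2)] by simp
qed

lemma unit_disks_intersect_iff: "unit_disk a \<inter> unit_disk b \<noteq> {} \<longleftrightarrow> dist a b \<le> 2"
proof
  assume "unit_disk a \<inter> unit_disk b \<noteq> {}"
  then obtain x where "dist a x \<le> 1" "dist b x \<le> 1" by (auto simp: unit_disk_def)
  then show "dist a b \<le> 2" using dist_triangle[of a b x] by (simp add: dist_commute)
next
  assume "dist a b \<le> 2"
  then have "midpoint a b \<in> unit_disk a \<inter> unit_disk b"
    by (simp add: unit_disk_def dist_midpoint)
  then show "unit_disk a \<inter> unit_disk b \<noteq> {}" by blast
qed

lemma triangle_free_irrefl: "triangle_free V E \<Longrightarrow> v \<in> V \<Longrightarrow> \<not> E v v"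
  unfolding triangle_free_def by blast

lemma triangle_free_unit_disk_graph_degenerate:
  assumes "finite V" "unit_disk_graph V E" "triangle_free V E"
  shows "degenerate 3 V E"
  unfolding degenerate_def
proof (intro allI impI)
  fix A assume A: "A \<subseteq> V" "A \<noteq> {}"
  obtain c :: "'a \<Rightarrow> real^2"
    where adj: "\<And>u v. u \<in> V \<Longrightarrow> v \<in> V \<Longrightarrow> u \<noteq> v \<Longrightarrow> E u v \<longleftrightarrow> dist (c u) (c v) \<le> 2"
    using assms(2) unfolding unit_disk_graph_def unit_disks_intersect_iff by blast
  have "finite A" using A(1) assms(1) by (rule finite_subset)
  obtain w where w: "w \<in> A" "\<And>u. u \<in> A \<Longrightarrow> c w $ 1 \<le> c u $ 1"
    using arg_min_if_finite(1)[OF \<open>finite A\<close> A(2), of "\<lambda>u. c u $ 1"]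
      arg_min_least[OF \<open>finite A\<close> A(2), of _ "\<lambda>u. c u $ 1"] by blast
  define N where "N = {u\<in>A. E w u}"
  have N: "u \<in> V" "u \<noteq> w" "c w $ 1 \<le> c u $ 1" "dist (c w) (c u) \<le> 2" if "u \<in> N" for u
  proof -
    show "u \<in> V" "c w $ 1 \<le> c u $ 1" using that A(1) w(2) unfolding N_def by auto
    show "u \<noteq> w" using that triangle_free_irrefl[OF assms(3)] A(1) unfolding N_def by blast
    then show "dist (c w) (c u) \<le> 2"
      using adj[of w u] that A(1) w(1) unfolding N_def by auto
  qed
  have "inj_on (\<lambda>u. sector (c u - c w)) N"
  proof (rule inj_onI, rule ccontr)
    fix u v assume uv: "u \<in> N" "v \<in> N" "sector (c u - c w) = sector (c v - c w)" "u \<noteq> v"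
    have "dist (c u - c w) (c v - c w) \<le> 2"
      using uv(1,2) N(3,4)
      by (intro dist_le_if_inner_ge_half_norm_mult inner_ge_half_norm_mult_if_same_sector uv(3))
        (auto simp: dist_norm norm_minus_commute)
    then have "E u v" using adj[of u v] N(1) uv by (simp add: dist_norm)
    then show False
      using uv(1,2) assms(3) A(1) w(1) unfolding N_def triangle_free_def by blast
  qed
  then have "card N \<le> card {0..<3::nat}"
    by (rule card_inj_on_le) (auto simp: sector_def)
  then show "\<exists>w\<in>A. card {u\<in>A. E w u} \<le> 3" using w(1) unfolding N_def by auto
qed

theorem lemma4p1:
  fixes V :: "'a set" and E :: "'a \<Rightarrow> 'a \<Rightarrow> bool"
  assumes "finite V"
    and "simple_graph V E"
    and "unit_disk_graph V E"
    and "triangle_free V E"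
  shows "\<exists>f. proper_coloring V E f \<and> (\<forall>v\<in>V. f v < 4)"
proof -
  have "degenerate 3 V E"
    using assms(1,3,4) by (rule triangle_free_unit_disk_graph_degenerate)
  then obtain f where "proper_coloring V E f" "\<forall>v\<in>V. f v \<le> 3"
    using degenerate_imp_proper_coloring[OF assms(1)] assms(2)
    unfolding simple_graph_def by blast
  then show ?thesis by force
qed

end
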